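(* Forgetting the action on $\mathcal M$, $(f_{\mathcal D},f_{\mathcal M})\mapsto f_{\mathcal D}$ and $(\delta_{\mathcal D},\delta_{\mathcal M})\mapsto\delta_{\mathcal D}$, maps $\mathrm{Aut}(\mathcal D,\mathcal M)$ into $\mathrm{Aut}(\mathcal D)_{\mathcal J}$ and $\mathrm{Der}(\mathcal D,\mathcal M)$ into $\mathrm{Der}(\mathcal D)_{\mathcal J}$.
   Context: Let $\Bbbk$ be a field of characteristic zero, $V$ a $2n$-dimensional $\Bbbk$-vector space with symplectic form $\omega$. Let $D$ be the universal enveloping algebra of the Heisenberg Lie algebra $V\oplus\Bbbk\hbar$ ($[x,y]=\omega(x,y)\hbar$, $\hbar$ central), graded with $V$ in degree 1 and $\hbar$ in degree 2; let $\mathcal D=\prod_{i\geq0}D^i$ and $\mathcal A=\mathcal D/\hbar\mathcal D$. Fix a Lagrangian subspace $\mathfrak x\subset V$, let $\mathcal M=\mathcal D/\mathcal D\mathfrak x$, and let $\mathcal J\subset\mathcal D$ be the preimage of the ideal $\mathcal A\mathfrak x$ under $\mathcal D\to\mathcal A$. $\mathrm{Aut}(\mathcal D)$ (resp. $\mathrm{Der}(\mathcal D)$) is the group of $\Bbbk[[\hbar]]$-linear continuous automorphisms (resp. Lie algebra of continuous $\Bbbk[[\hbar]]$-linear derivations) of $\mathcal D$, and $\mathrm{Aut}(\mathcal D)_{\mathcal J}$, $\mathrm{Der}(\mathcal D)_{\mathcal J}$ consist of those $f$ with $f(\mathcal J)\subset\mathcal J$. $\mathrm{Der}(\mathcal D,\mathcal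 M)$ is the Lie algebra of pairs $(\delta_{\mathcal D},\delta_{\mathcal M})$ with $\delta_{\mathcal D}\in\mathrm{Der}(\mathcal D)$ and $\delta_{\mathcal M}:\mathcal M\to\mathcal M$ continuous $\Bbbk[[\hbar]]$-linear with $\delta_{\mathcal M}(um)=\delta_{\mathcal D}(u)m+u\,\delta_{\mathcal M}(m)$; $\mathrm{Aut}(\mathcal D,\mathcal M)$ is the group of pairs $(f_{\mathcal D},f_{\mathcal M})$ with $f_{\mathcal D}\in\mathrm{Aut}(\mathcal D)$ and $f_{\mathcal M}:\mathcal M\to\mathcal M$ a continuous $\Bbbk[[\hbar]]$-linear bijection with $f_{\mathcal M}(um)=f_{\mathcal D}(u)f_{\mathcal M}(m)$. *)

theory Defs
  imports Main "HOL-Library.Function_Algebras"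
begin

text \<open>
V is coordinatised by a basis indexed by a finite type 'i,
the symplectic form omega is given by its Gram matrix W (omega(e_i,e_j) = W i j).
The completed enveloping algebra of the Heisenberg Lie algebra (V in degree 1,
hbar in degree 2) is realised, via the (grading preserving) symmetrisation /
Weyl-ordering isomorphism, as the algebra of all formal series
  sum over (alpha,m) of u(alpha,m) x^alpha hbar^m
(every homogeneous piece is finite dimensional, so the degree-wise product is
the set of all coefficient functions) with the Moyal product
  a * b = mult (exp((hbar/2) sum_ij W i j d_i (x) d_j)(a (x) b)),
for which x_i * x_j - x_j * x_i = W i j hbar.
\<close>

type_synonym ('i,'k) ser = "(('i \<Rightarrow> nat) \<times> nat) \<Rightarrow> 'k"

definition unitv :: "'i \<Rightarrow> 'i \<Rightarrow> nat" where
  "unitv i = (\<lambda>j. if j = i then 1 else 0)"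

definition ffact :: "nat \<Rightarrow> nat \<Rightarrow> 'k::field_char_0" where
  "ffact a c = of_nat (fact a div fact (a - c))"

text \<open>coefficient of x^gamma hbar^k in the Moyal product x^alpha * x^beta\<close>
definition mcoef :: "('i::finite \<Rightarrow> 'i \<Rightarrow> 'k::field_char_0) \<Rightarrow> ('i \<Rightarrow> nat) \<Rightarrow> ('i \<Rightarrow> nat)
    \<Rightarrow> nat \<Rightarrow> ('i \<Rightarrow> nat) \<Rightarrow> 'k" where
  "mcoef W \<alpha> \<beta> k \<gamma> = (1 / (2 ^ k * fact k)) *
     (\<Sum>I\<in>{I. length I = k}. \<Sum>J\<in>{J. length J = k}.
        if (\<forall>i. count_list I i \<le> \<alpha> i \<and> count_list J i \<le> \<beta> i \<and>
                 (\<alpha> i - count_list I i) + (\<beta> i - count_list J i) = \<gamma> i)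
        then (\<Prod>t<k. W (I ! t) (J ! t)) *
             (\<Prod>i\<in>UNIV. ffact (\<alpha> i) (count_list I i) * ffact (\<beta> i) (count_list J i))
        else 0)"

definition star :: "('i::finite \<Rightarrow> 'i \<Rightarrow> 'k::field_char_0) \<Rightarrow> ('i,'k) ser \<Rightarrow> ('i,'k) ser \<Rightarrow> ('i,'k) ser" where
  "star W a b = (\<lambda>(\<gamma>, m).
     \<Sum>((\<alpha>, p), (\<beta>, q)) \<in> {((\<alpha>, p), (\<beta>, q)). p + q \<le> m \<and>
          sum \<alpha> UNIV + sum \<beta> UNIV = sum \<gamma> UNIV + 2 * (m - p - q)}.
       a (\<alpha>, p) * b (\<beta>, q) * mcoef W \<alpha> \<beta> (m - p - q) \<gamma>)"

text \<open>k[[hbar]]-module structure: multiplication by the power series sum_p c p hbar^p\<close>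
definition hmult :: "(nat \<Rightarrow> 'k::field_char_0) \<Rightarrow> ('i,'k) ser \<Rightarrow> ('i,'k) ser" where
  "hmult c u = (\<lambda>(\<alpha>, m). \<Sum>p\<le>m. c p * u (\<alpha>, m - p))"

definition hser :: "(nat \<Rightarrow> 'k::field_char_0) \<Rightarrow> ('i,'k) ser" where
  "hser c = (\<lambda>(\<alpha>, m). if \<alpha> = (\<lambda>_. 0) then c m else 0)"

definition hbar :: "('i,'k::field_char_0) ser" where
  "hbar = hser (\<lambda>m. if m = 1 then 1 else 0)"

text \<open>the element of V (degree one) with coordinates v\<close>
definition lin :: "('i::finite \<Rightarrow> 'k::field_char_0) \<Rightarrow> ('i,'k) ser" where
  "lin v = (\<lambda>(\<alpha>, m). if m = 0 then (\<Sum>i\<in>UNIV. if \<alpha> = unitv i then v i else 0) else 0)"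

definition bform :: "('i::finite \<Rightarrow> 'i \<Rightarrow> 'k::field_char_0) \<Rightarrow> ('i \<Rightarrow> 'k) \<Rightarrow> ('i \<Rightarrow> 'k) \<Rightarrow> 'k" where
  "bform W u v = (\<Sum>i\<in>UNIV. \<Sum>j\<in>UNIV. u i * W i j * v j)"

definition symplectic :: "('i::finite \<Rightarrow> 'i \<Rightarrow> 'k::field_char_0) \<Rightarrow> bool" where
  "symplectic W \<longleftrightarrow> (\<forall>i j. W i j = - W j i) \<and>
     (\<forall>u. (\<forall>v. bform W u v = 0) \<longrightarrow> u = (\<lambda>_. 0))"

definition lagrangian :: "('i::finite \<Rightarrow> 'i \<Rightarrow> 'k::field_char_0) \<Rightarrow> ('i \<Rightarrow> 'k) set \<Rightarrow> bool" where
  "lagrangian W X \<longleftrightarrow>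
     (\<lambda>_. 0) \<in> X \<and> (\<forall>u\<in>X. \<forall>v\<in>X. (\<lambda>i. u i + v i) \<in> X) \<and>
     (\<forall>c. \<forall>u\<in>X. (\<lambda>i. c * u i) \<in> X) \<and>
     (\<forall>u\<in>X. \<forall>v\<in>X. bform W u v = 0) \<and>
     (\<forall>v. (\<forall>u\<in>X. bform W u v = 0) \<longrightarrow> v \<in> X)"

text \<open>topology: the filtration F_N = prod_{i >= N} D^i (degree |alpha| + 2m)\<close>
definition filt :: "nat \<Rightarrow> ('i::finite,'k::field_char_0) ser set" where
  "filt N = {u. \<forall>\<alpha> m. sum \<alpha> UNIV + 2 * m < N \<longrightarrow> u (\<alpha>, m) = 0}"

definition contD :: "(('i::finite,'k::field_char_0) ser \<Rightarrow> ('i,'k) ser) \<Rightarrow> bool" where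
  "contD f \<longleftrightarrow> (\<forall>N. \<exists>K. \<forall>u\<in>filt K. f u \<in> filt N)"

definition khlin :: "(('i::finite,'k::field_char_0) ser \<Rightarrow> ('i,'k) ser) \<Rightarrow> bool" where
  "khlin f \<longleftrightarrow> (\<forall>u v. f (u + v) = f u + f v) \<and> (\<forall>c u. f (hmult c u) = hmult c (f u))"

definition AutD :: "('i::finite \<Rightarrow> 'i \<Rightarrow> 'k::field_char_0) \<Rightarrow> (('i,'k) ser \<Rightarrow> ('i,'k) ser) set" where
  "AutD W = {f. bij f \<and> khlin f \<and> (\<forall>a b. f (star W a b) = star W (f a) (f b)) \<and> contD f}"

definition DerD :: "('i::finite \<Rightarrow> 'i \<Rightarrow> 'k::field_char_0) \<Rightarrow> (('i,'k) ser \<Rightarrow> ('i,'k) ser) set" where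
  "DerD W = {d. khlin d \<and> (\<forall>a b. d (star W a b) = star W (d a) b + star W a (d b)) \<and> contD d}"

text \<open>the left ideal D x, and J = preimage of A x under D -> A = D / hbar D\<close>
definition DX :: "('i::finite \<Rightarrow> 'i \<Rightarrow> 'k::field_char_0) \<Rightarrow> ('i \<Rightarrow> 'k) set \<Rightarrow> ('i,'k) ser set" where
  "DX W X = {\<Sum>t<(N::nat). star W (u t) (lin (v t)) | N u v. \<forall>t<N. v t \<in> X}"

definition JJ :: "('i::finite \<Rightarrow> 'i \<Rightarrow> 'k::field_char_0) \<Rightarrow> ('i \<Rightarrow> 'k) set \<Rightarrow> ('i,'k) ser set" where
  "JJ W X = {u. \<exists>w\<in>DX W X. \<exists>v. u - w = star W hbar v}"

definition AutDJ :: "('i::finite \<Rightarrow> 'i \<Rightarrow> 'k::field_char_0) \<Rightarrow> ('i \<Rightarrow> 'k) set \<Rightarrow> (('i,'k) ser \<Rightarrow> ('i,'k) ser) set" where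
  "AutDJ W X = {f \<in> AutD W. \<forall>u\<in>JJ W X. f u \<in> JJ W X}"

definition DerDJ :: "('i::finite \<Rightarrow> 'i \<Rightarrow> 'k::field_char_0) \<Rightarrow> ('i \<Rightarrow> 'k) set \<Rightarrow> (('i,'k) ser \<Rightarrow> ('i,'k) ser) set" where
  "DerDJ W X = {d \<in> DerD W. \<forall>u\<in>JJ W X. d u \<in> JJ W X}"

text \<open>the module M = D / D x, elements are cosets of D x\<close>
definition Mcls :: "('i::finite \<Rightarrow> 'i \<Rightarrow> 'k::field_char_0) \<Rightarrow> ('i \<Rightarrow> 'k) set \<Rightarrow> ('i,'k) ser \<Rightarrow> ('i,'k) ser set" where
  "Mcls W X u = {v. v - u \<in> DX W X}"

definition Mcar :: "('i::finite \<Rightarrow> 'i \<Rightarrow> 'k::field_char_0) \<Rightarrow> ('i \<Rightarrow> 'k) set \<Rightarrow> ('i,'k) ser set set" where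
  "Mcar W X = range (Mcls W X)"

definition madd :: "('i::finite \<Rightarrow> 'i \<Rightarrow> 'k::field_char_0) \<Rightarrow> ('i \<Rightarrow> 'k) set \<Rightarrow> ('i,'k) ser set \<Rightarrow> ('i,'k) ser set \<Rightarrow> ('i,'k) ser set" where
  "madd W X m1 m2 = (\<Union>v1\<in>m1. \<Union>v2\<in>m2. Mcls W X (v1 + v2))"

definition mact :: "('i::finite \<Rightarrow> 'i \<Rightarrow> 'k::field_char_0) \<Rightarrow> ('i \<Rightarrow> 'k) set \<Rightarrow> ('i,'k) ser \<Rightarrow> ('i,'k) ser set \<Rightarrow> ('i,'k) ser set" where
  "mact W X u m = (\<Union>v\<in>m. Mcls W X (star W u v))"

definition mhmult :: "('i::finite \<Rightarrow> 'i \<Rightarrow> 'k::field_char_0) \<Rightarrow> ('i \<Rightarrow> 'k) set \<Rightarrow> (nat \<Rightarrow> 'k) \<Rightarrow> ('i,'k) ser set \<Rightarrow> ('i,'k) ser set" where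
  "mhmult W X c m = (\<Union>v\<in>m. Mcls W X (hmult c v))"

definition Mfilt :: "('i::finite \<Rightarrow> 'i \<Rightarrow> 'k::field_char_0) \<Rightarrow> ('i \<Rightarrow> 'k) set \<Rightarrow> nat \<Rightarrow> ('i,'k) ser set set" where
  "Mfilt W X N = Mcls W X ` filt N"

definition contM :: "('i::finite \<Rightarrow> 'i \<Rightarrow> 'k::field_char_0) \<Rightarrow> ('i \<Rightarrow> 'k) set \<Rightarrow> (('i,'k) ser set \<Rightarrow> ('i,'k) ser set) \<Rightarrow> bool" where
  "contM W X g \<longleftrightarrow> (\<forall>N. \<exists>K. \<forall>m\<in>Mfilt W X K. g m \<in> Mfilt W X N)"

definition khlinM :: "('i::finite \<Rightarrow> 'i \<Rightarrow> 'k::field_char_0) \<Rightarrow> ('i \<Rightarrow> 'k) set \<Rightarrow> (('i,'k) ser set \<Rightarrow> ('i,'k) ser set) \<Rightarrow> bool" where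
  "khlinM W X g \<longleftrightarrow>
     (\<forall>m1\<in>Mcar W X. \<forall>m2\<in>Mcar W X. g (madd W X m1 m2) = madd W X (g m1) (g m2)) \<and>
     (\<forall>c. \<forall>m\<in>Mcar W X. g (mhmult W X c m) = mhmult W X c (g m))"

definition AutDM :: "('i::finite \<Rightarrow> 'i \<Rightarrow> 'k::field_char_0) \<Rightarrow> ('i \<Rightarrow> 'k) set \<Rightarrow>
    ((('i,'k) ser \<Rightarrow> ('i,'k) ser) \<times> (('i,'k) ser set \<Rightarrow> ('i,'k) ser set)) set" where
  "AutDM W X = {(f, g). f \<in> AutD W \<and> bij_betw g (Mcar W X) (Mcar W X) \<and> khlinM W X g \<and>
     contM W X g \<and> (\<forall>u. \<forall>m\<in>Mcar W X. g (mact W X u m) = mact W X (f u) (g m))}"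

definition DerDM :: "('i::finite \<Rightarrow> 'i \<Rightarrow> 'k::field_char_0) \<Rightarrow> ('i \<Rightarrow> 'k) set \<Rightarrow>
    ((('i,'k) ser \<Rightarrow> ('i,'k) ser) \<times> (('i,'k) ser set \<Rightarrow> ('i,'k) ser set)) set" where
  "DerDM W X = {(d, e). d \<in> DerD W \<and> e ` Mcar W X \<subseteq> Mcar W X \<and> khlinM W X e \<and>
     contM W X e \<and>
     (\<forall>u. \<forall>m\<in>Mcar W X. e (mact W X u m) = madd W X (mact W X (d u) m) (mact W X u (e m)))}"

end

theory Submission
  imports Defs
begin

text \<open>
  Modulo hbar the Moyal product becomes the commutative product of power series, so
  J = D X + hbar D is the preimage of the ideal generated by the Lagrangian subspace X. Hence J
  is a two-sided ideal, generated as a left ideal by X and hbar, and a continuous hbar-linear map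
  that is multiplicative or a derivation preserves J as soon as it maps X into J.
  Let x \<in> X. For a pair (f, g), pick m with g m = [1]; as x m lies in hbar M, so does
  [f x] = f x \<cdot> g m = g (x m), i.e. f x \<in> J. For a pair (d, e), applying e to x [1] = 0 gives
  [d x] = - x e [1], which lies in the image of J.
  Elements of D are only ever multiplied by elements of V, where left and right multiplication
  commute by an explicit computation.
\<close>

lemma ffact_0 [simp]: "ffact a 0 = 1"
  by (simp add: ffact_def)

lemma ffact_1: "ffact a (Suc 0) = (if a = 0 then 1 else of_nat a)"
  by (cases a) (simp_all add: ffact_def)

lemma unitv_apply: "unitv j i = (if i = j then 1 else 0)"
  by (simp add: unitv_def)

lemma sum_unitv: "sum (unitv j) (UNIV :: 'i::finite set) = 1"
  by (simp add: unitv_apply)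

lemma sum_fun_upd_UNIV:
  fixes f :: "'i::finite \<Rightarrow> nat"
  shows "sum (f(i := y)) UNIV + f i = sum f UNIV + y"
  using sum.remove[of UNIV i f] sum.remove[of UNIV i "f(i := y)"] by simp

lemma add_unitv_eq_iff:
  "(\<forall>i. \<alpha> i + unitv j i = \<gamma> i) \<longleftrightarrow> 0 < \<gamma> j \<and> \<alpha> = \<gamma>(j := \<gamma> j - 1)"
proof
  assume "\<forall>i. \<alpha> i + unitv j i = \<gamma> i"
  then have "\<alpha> j + 1 = \<gamma> j" and "\<And>i. i \<noteq> j \<Longrightarrow> \<alpha> i = \<gamma> i"
    by (metis unitv_apply add.right_neutral)+
  then show "0 < \<gamma> j \<and> \<alpha> = \<gamma>(j := \<gamma> j - 1)" by (auto simp: fun_eq_iff)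
qed (auto simp: unitv_apply)

lemma count_list_le_unitv_length:
  assumes "\<forall>i. count_list J i \<le> unitv j i" shows "length J \<le> 1"
proof (rule ccontr)
  assume "\<not> length J \<le> 1"
  then obtain x y r where J: "J = x # y # r"
    by (cases J rule: remdups_adj.cases) auto
  have "x = j" "y = j" using assms[rule_format, of x] assms[rule_format, of y]
    by (auto simp: J unitv_apply split: if_splits)
  then show False using assms[rule_format, of j] by (simp add: J unitv_apply)
qed

lemma mcoef_0: "mcoef W \<alpha> \<beta> 0 \<gamma> = (if \<forall>i. \<alpha> i + \<beta> i = \<gamma> i then 1 else 0)"
proof -
  have "{I::'i list. length I = 0} = {[]}" by auto
  then show ?thesis unfolding mcoef_def by (simp only: length_0_conv singleton_conv) simp
qed

lemma mcoef_transpose: "mcoef W \<alpha> \<beta> k \<gamma> = mcoef (\<lambda>i j. W j i) \<beta> \<alpha> k \<gamma>"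
  unfolding mcoef_def
  by (subst sum.swap) (simp only: conj_ac add.commute mult.commute)

lemma mcoef_eq_0_if_no_sublist:
  assumes "\<And>J. length J = k \<Longrightarrow> \<not> (\<forall>i. count_list J i \<le> \<beta> i)"
  shows "mcoef W \<alpha> \<beta> k \<gamma> = 0"
  unfolding mcoef_def using assms
  by (intro mult_eq_0_iff[THEN iffD2] disjI2 sum.neutral ballI if_not_P) blast

lemma mcoef_zero_right: "mcoef W \<alpha> (\<lambda>_. 0) k \<gamma> = (if k = 0 \<and> \<alpha> = \<gamma> then 1 else 0)"
proof (cases k)
  case 0 then show ?thesis by (auto simp: mcoef_0 fun_eq_iff)
next
  case (Suc n)
  then have "mcoef W \<alpha> (\<lambda>_. 0) k \<gamma> = 0"
    by (intro mcoef_eq_0_if_no_sublist) (auto simp: length_Suc_conv)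
  with Suc show ?thesis by simp
qed

lemma mcoef_unitv_right_1:
  fixes W :: "'i::finite \<Rightarrow> 'i \<Rightarrow> 'k::field_char_0"
  shows "mcoef W \<alpha> (unitv j) 1 \<gamma> =
    (\<Sum>i\<in>UNIV. if \<alpha> = \<gamma>(i := \<gamma> i + 1) then W i j * of_nat (\<gamma> i + 1) / 2 else 0)"
proof -
  have singletons: "{I::'i list. length I = 1} = range (\<lambda>i. [i])"
    by (auto simp: length_Suc_conv)
  have inj: "inj (\<lambda>i::'i. [i])"
    by (simp add: inj_on_def)
  have cond: "(\<forall>i. count_list [i0] i \<le> \<alpha> i \<and> count_list [j'] i \<le> unitv j i \<and>
      \<alpha> i - count_list [i0] i + (unitv j i - count_list [j'] i) = \<gamma> i)
    \<longleftrightarrow> j' = j \<and> \<alpha> = \<gamma>(i0 := \<gamma> i0 + 1)" for i0 j'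
  proof
    assume H: "\<forall>i. count_list [i0] i \<le> \<alpha> i \<and> count_list [j'] i \<le> unitv j i \<and>
      \<alpha> i - count_list [i0] i + (unitv j i - count_list [j'] i) = \<gamma> i"
    have "j' = j" using H[rule_format, of j'] by (auto simp: unitv_apply split: if_splits)
    moreover have "\<alpha> i = (\<gamma>(i0 := \<gamma> i0 + 1)) i" for i
      using H[rule_format, of i] \<open>j' = j\<close> by (auto simp: unitv_apply split: if_splits)
    ultimately show "j' = j \<and> \<alpha> = \<gamma>(i0 := \<gamma> i0 + 1)" by auto
  qed (auto simp: unitv_apply)
  have prod: "(\<Prod>i\<in>UNIV. ffact ((\<gamma>(i0 := \<gamma> i0 + 1)) i) (count_list [i0] i) *
      ffact (unitv j i) (count_list [j] i)) = (of_nat (\<gamma> i0 + 1) :: 'k)" for i0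
  proof -
    have "ffact ((\<gamma>(i0 := \<gamma> i0 + 1)) i) (count_list [i0] i) * ffact (unitv j i) (count_list [j] i)
        = (if i = i0 then of_nat (\<gamma> i0 + 1) else (1 :: 'k))" for i
      by (auto simp: unitv_apply ffact_1)
    then show ?thesis by (simp add: prod.delta)
  qed
  have delta_j: "(\<Sum>j'\<in>UNIV. if j' = j \<and> P then F j' else 0) = (if P then F j else (0::'k))"
    for P and F :: "'i \<Rightarrow> 'k"
    by (cases P) (simp_all add: sum.delta)
  have "mcoef W \<alpha> (unitv j) 1 \<gamma> = (\<Sum>i0\<in>UNIV. \<Sum>j'\<in>UNIV.
      if j' = j \<and> \<alpha> = \<gamma>(i0 := \<gamma> i0 + 1) then W i0 j' *
        (\<Prod>i\<in>UNIV. ffact (\<alpha> i) (count_list [i0] i) * ffact (unitv j i) (count_list [j'] i))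
      else 0) / 2"
    unfolding mcoef_def singletons
    by (simp only: sum.reindex[OF inj] o_def cond) (simp add: lessThan_Suc cong: if_cong)
  also have "\<dots> = (\<Sum>i0\<in>UNIV. if \<alpha> = \<gamma>(i0 := \<gamma> i0 + 1) then W i0 j *
        (\<Prod>i\<in>UNIV. ffact (\<alpha> i) (count_list [i0] i) * ffact (unitv j i) (count_list [j] i))
      else 0) / 2"
    by (simp only: delta_j)
  also have "\<dots> = (\<Sum>i\<in>UNIV. if \<alpha> = \<gamma>(i := \<gamma> i + 1) then W i j * of_nat (\<gamma> i + 1) / 2 else 0)"
    unfolding sum_divide_distrib
    by (intro sum.cong refl) (simp only: prod if_distrib[of "\<lambda>x. x / 2"] cong: if_cong, simp)
  finally show ?thesis .
qed

lemma mcoef_unitv_right: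
  "mcoef W \<alpha> (unitv j) k \<gamma> =
     (if k = 0 \<and> 0 < \<gamma> j \<and> \<alpha> = \<gamma>(j := \<gamma> j - 1) then 1 else 0) +
     (\<Sum>i\<in>UNIV. if k = 1 \<and> \<alpha> = \<gamma>(i := \<gamma> i + 1) then W i j * of_nat (\<gamma> i + 1) / 2 else 0)"
proof -
  consider "k = 0" | "k = 1" | "k \<ge> 2" by linarith
  then show ?thesis
  proof cases
    case 1
    then show ?thesis by (simp add: mcoef_0 add_unitv_eq_iff)
  next
    case 2
    then show ?thesis
      using mcoef_unitv_right_1[of W \<alpha> j \<gamma>] by simp
  next
    case 3
    then have "mcoef W \<alpha> (unitv j) k \<gamma> = 0"
      by (intro mcoef_eq_0_if_no_sublist) (use count_list_le_unitv_length in fastforce)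
    with 3 show ?thesis by simp
  qed
qed

definition star_index :: "('i::finite \<Rightarrow> nat) \<Rightarrow> nat \<Rightarrow> ((('i \<Rightarrow> nat) \<times> nat) \<times> (('i \<Rightarrow> nat) \<times> nat)) set"
  where "star_index \<gamma> m = {((\<alpha>, p), (\<beta>, q)). p + q \<le> m \<and>
     sum \<alpha> UNIV + sum \<beta> UNIV = sum \<gamma> UNIV + 2 * (m - p - q)}"

lemma star_apply:
  "star W a b (\<gamma>, m) = (\<Sum>x\<in>star_index \<gamma> m. a (fst x) * b (snd x) *
     mcoef W (fst (fst x)) (fst (snd x)) (m - snd (fst x) - snd (snd x)) \<gamma>)"
  unfolding star_def star_index_def by (simp add: case_prod_beta)

lemma finite_bounded_exponents: "finite {\<alpha> :: 'i::finite \<Rightarrow> nat. \<forall>i. \<alpha> i \<le> N}"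
  using finite_set_of_finite_funs[of "UNIV :: 'i set" "{..N}" 0] by simp

lemma finite_star_index:
  fixes \<gamma> :: "'i::finite \<Rightarrow> nat"
  shows "finite (star_index \<gamma> m)"
proof -
  let ?B = "{\<alpha> :: 'i \<Rightarrow> nat. \<forall>i. \<alpha> i \<le> sum \<gamma> UNIV + 2 * m} \<times> {..m}"
  have "star_index \<gamma> m \<subseteq> ?B \<times> ?B"
  proof
    fix x assume "x \<in> star_index \<gamma> m"
    then obtain \<alpha> p \<beta> q where x: "x = ((\<alpha>, p), (\<beta>, q))" and "p + q \<le> m"
      "sum \<alpha> UNIV + sum \<beta> UNIV = sum \<gamma> UNIV + 2 * (m - p - q)"
      unfolding star_index_def by auto
    then have "sum \<alpha> UNIV \<le> sum \<gamma> UNIV + 2 * m" "sum \<beta> UNIV \<le> sum \<gamma> UNIV + 2 * m"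
      by linarith+
    moreover have "\<alpha> i \<le> sum \<alpha> UNIV" "\<beta> i \<le> sum \<beta> UNIV" for i
      by (simp_all add: member_le_sum)
    ultimately show "x \<in> ?B \<times> ?B" unfolding x
      using \<open>p + q \<le> m\<close> by (auto intro: order_trans)
  qed
  moreover have "finite (?B \<times> ?B)" by (simp add: finite_bounded_exponents)
  ultimately show ?thesis by (rule finite_subset)
qed

lemma star_apply_eq_sum_deltas:
  assumes "finite T"
    and "\<And>x. x \<in> star_index \<gamma> m \<Longrightarrow> a (fst x) * b (snd x) *
      mcoef W (fst (fst x)) (fst (snd x)) (m - snd (fst x) - snd (snd x)) \<gamma> =
      (\<Sum>t\<in>T. if x = h t then c t else 0)"
    and "\<And>t. t \<in> T \<Longrightarrow> c t \<noteq> 0 \<Longrightarrow> h t \<in> star_index \<gamma> m"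
  shows "star W a b (\<gamma>, m) = (\<Sum>t\<in>T. c t)"
proof -
  have "star W a b (\<gamma>, m) = (\<Sum>x\<in>star_index \<gamma> m. \<Sum>t\<in>T. if x = h t then c t else 0)"
    unfolding star_apply by (rule sum.cong[OF refl]) (rule assms(2))
  also have "\<dots> = (\<Sum>t\<in>T. if h t \<in> star_index \<gamma> m then c t else 0)"
    by (subst sum.swap) (simp add: sum.delta' finite_star_index)
  also have "\<dots> = (\<Sum>t\<in>T. c t)"
    using assms(3) by (intro sum.cong) auto
  finally show ?thesis .
qed

lemma star_apply_eq_delta:
  assumes "\<And>x. x \<in> star_index \<gamma> m \<Longrightarrow> a (fst x) * b (snd x) *
      mcoef W (fst (fst x)) (fst (snd x)) (m - snd (fst x) - snd (snd x)) \<gamma> =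
      (if x = y then c else 0)"
    and "c \<noteq> 0 \<Longrightarrow> y \<in> star_index \<gamma> m"
  shows "star W a b (\<gamma>, m) = c"
  using star_apply_eq_sum_deltas[of "{y}" \<gamma> m a b W id "\<lambda>_. c"] assms by simp

lemma star_transpose:
  fixes W :: "'i::finite \<Rightarrow> 'i \<Rightarrow> 'k::field_char_0"
  shows "star W a b = star (\<lambda>i j. W j i) b a"
proof (intro ext, clarify)
  fix \<gamma> :: "'i \<Rightarrow> nat" and m
  have swap: "prod.swap ` star_index \<gamma> m = star_index \<gamma> m"
    by (force simp: star_index_def add.commute)
  show "star W a b (\<gamma>, m) = star (\<lambda>i j. W j i) b a (\<gamma>, m)"
    unfolding star_apply
    by (subst swap[symmetric], subst sum.reindex) (auto simp: mcoef_transpose[of W] ac_simps)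
qed

definition one :: "('i::finite, 'k::field_char_0) ser"
  where "one = (\<lambda>(\<alpha>, m). if \<alpha> = (\<lambda>_. 0) \<and> m = 0 then 1 else 0)"

definition mul_hbar :: "('i, 'k::field_char_0) ser \<Rightarrow> ('i, 'k) ser"
  where "mul_hbar b = (\<lambda>(\<gamma>, m). if 0 < m then b (\<gamma>, m - 1) else 0)"

lemma star_one_right: "star W a one = a"
proof (intro ext, clarify)
  fix \<gamma> m
  show "star W a one (\<gamma>, m) = a (\<gamma>, m)"
    by (rule star_apply_eq_delta[where y = "((\<gamma>, m), ((\<lambda>_. 0), 0))"])
      (auto simp: star_index_def one_def mcoef_zero_right split: if_splits)
qed

lemma star_one_left: "star W one b = b"
  by (simp add: star_transpose[of W] star_one_right)

lemma star_hbar_left: "star W hbar b = mul_hbar b"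
proof (intro ext, clarify)
  fix \<gamma> m
  show "star W hbar b (\<gamma>, m) = mul_hbar b (\<gamma>, m)"
    unfolding star_transpose[of W]
    by (rule star_apply_eq_delta[where y = "((\<gamma>, m - 1), ((\<lambda>_. 0), 1))"])
      (auto simp: star_index_def hbar_def hser_def mcoef_zero_right mul_hbar_def split: if_splits)
qed

lemma hmult_hbar: "hmult (\<lambda>p. if p = 1 then 1 else 0) b = mul_hbar b"
  by (intro ext) (auto simp: hmult_def mul_hbar_def if_distrib[of "\<lambda>c. c * _"] sum.delta
      cong: if_cong)

lemma hmult_zero: "hmult (\<lambda>_. 0) b = 0"
  by (intro ext) (simp add: hmult_def split: prod.splits)

lemma star_add_right: "star W a (b1 + b2) = star W a b1 + star W a b2"
  by (intro ext, clarify) (simp add: star_apply distrib_left distrib_right sum.distrib)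

lemma star_uminus_left: "star W (- a) b = - star W a b"
  by (intro ext, clarify) (simp add: star_apply sum_negf)

lemma star_diff_right: "star W a (b1 - b2) = star W a b1 - star W a b2"
  by (intro ext, clarify) (simp add: star_apply algebra_simps sum_subtractf)

lemma star_zero_right: "star W a 0 = 0"
  by (intro ext, clarify) (simp add: star_apply)

subsection \<open>Multiplication by elements of V\<close>

definition mul_x :: "'i \<Rightarrow> ('i, 'k::field_char_0) ser \<Rightarrow> ('i, 'k) ser"
  where "mul_x j b = (\<lambda>(\<gamma>, m). if 0 < \<gamma> j then b (\<gamma>(j := \<gamma> j - 1), m) else 0)"

definition deriv_x :: "'i \<Rightarrow> ('i, 'k::field_char_0) ser \<Rightarrow> ('i, 'k) ser"
  where "deriv_x i b = (\<lambda>(\<gamma>, m). of_nat (\<gamma> i + 1) * b (\<gamma>(i := \<gamma> i + 1), m))"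

definition mul_lin :: "('i::finite \<Rightarrow> 'k::field_char_0) \<Rightarrow> ('i, 'k) ser \<Rightarrow> ('i, 'k) ser"
  where "mul_lin v b = (\<lambda>x. \<Sum>j\<in>UNIV. v j * mul_x j b x)"

definition deriv_lin ::
    "('i::finite \<Rightarrow> 'i \<Rightarrow> 'k::field_char_0) \<Rightarrow> ('i \<Rightarrow> 'k) \<Rightarrow> ('i, 'k) ser \<Rightarrow> ('i, 'k) ser"
  where "deriv_lin U v b = (\<lambda>x. \<Sum>j\<in>UNIV. \<Sum>i\<in>UNIV. U i j * v j * deriv_x i b x)"

text \<open>
  For v \<in> V the Moyal series terminates after the first order:
  b \<star> v = b v + (hbar/2) \<partial> b, with \<partial> the derivative along the vector W v;
  v \<star> b is the same operator for the transposed form.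
\<close>

definition star_lin ::
    "('i::finite \<Rightarrow> 'i \<Rightarrow> 'k::field_char_0) \<Rightarrow> ('i \<Rightarrow> 'k) \<Rightarrow> ('i, 'k) ser \<Rightarrow> ('i, 'k) ser"
  where "star_lin U v b = (\<lambda>x. mul_lin v b x + mul_hbar (deriv_lin U v b) x / 2)"

lemma lin_apply: "lin v (\<beta>, q) = (\<Sum>j\<in>UNIV. if (\<beta>, q) = (unitv j, 0) then v j else 0)"
  by (auto simp: lin_def intro: sum.cong)

lemma sum_UNIV_option_times:
  fixes g :: "'a::finite option \<times> 'b::finite \<Rightarrow> 'c::comm_monoid_add"
  shows "(\<Sum>t\<in>UNIV. g t) = (\<Sum>j\<in>UNIV. g (None, j)) + (\<Sum>j\<in>UNIV. \<Sum>i\<in>UNIV. g (Some i, j))"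
proof -
  have "(\<Sum>t\<in>UNIV. g t) = (\<Sum>j\<in>UNIV. \<Sum>k\<in>UNIV. g (k, j))"
    by (subst sum.swap) (simp add: sum.cartesian_product)
  also have "\<dots> = (\<Sum>j\<in>UNIV. g (None, j) + (\<Sum>i\<in>UNIV. g (Some i, j)))"
    by (simp add: UNIV_option_conv sum.reindex)
  finally show ?thesis by (simp only: sum.distrib)
qed

lemma star_index_unitv:
  "0 < \<gamma> j \<Longrightarrow> ((\<gamma>(j := \<gamma> j - 1), m), (unitv j, 0)) \<in> star_index \<gamma> m"
  "0 < m \<Longrightarrow> ((\<gamma>(i := \<gamma> i + 1), m - 1), (unitv j, 0)) \<in> star_index \<gamma> m"
  using sum_fun_upd_UNIV[of \<gamma> j "\<gamma> j - 1"] sum_fun_upd_UNIV[of \<gamma> i "\<gamma> i + 1"]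
  by (simp_all add: star_index_def sum_unitv)

lemma star_lin_right_apply:
  fixes W :: "'i::finite \<Rightarrow> 'i \<Rightarrow> 'k::field_char_0"
  shows "star W a (lin v) (\<gamma>, m) =
    (\<Sum>j\<in>UNIV. if 0 < \<gamma> j then a (\<gamma>(j := \<gamma> j - 1), m) * v j else 0) +
    (\<Sum>j\<in>UNIV. \<Sum>i\<in>UNIV. if 0 < m then
       W i j * v j * (of_nat (\<gamma> i + 1) * a (\<gamma>(i := \<gamma> i + 1), m - 1)) / 2 else 0)"
proof -
  define h where "h t = (case t of
      (None, j) \<Rightarrow> ((\<gamma>(j := \<gamma> j - 1), m), (unitv j, 0::nat))
    | (Some i, j) \<Rightarrow> ((\<gamma>(i := \<gamma> i + 1), m - 1), (unitv j, 0)))" for t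
  define c where "c t = (case t of
      (None, j) \<Rightarrow> if 0 < \<gamma> j then a (\<gamma>(j := \<gamma> j - 1), m) * v j else 0
    | (Some i, j) \<Rightarrow>
        if 0 < m then W i j * v j * (of_nat (\<gamma> i + 1) * a (\<gamma>(i := \<gamma> i + 1), m - 1)) / 2 else 0)"
    for t
  have "star W a (lin v) (\<gamma>, m) = (\<Sum>t\<in>UNIV. c t)"
  proof (rule star_apply_eq_sum_deltas[where h = h])
    fix x assume "x \<in> star_index \<gamma> m"
    then obtain \<alpha> p \<beta> q where x: "x = ((\<alpha>, p), (\<beta>, q))" and "p \<le> m"
      unfolding star_index_def by auto
    have lin_expand: "a (\<alpha>, p) * lin v (\<beta>, q) * mcoef W \<alpha> \<beta> (m - p - q) \<gamma> = (\<Sum>j\<in>UNIV.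
        if (\<beta>, q) = (unitv j, 0) then a (\<alpha>, p) * v j * mcoef W \<alpha> (unitv j) (m - p) \<gamma> else 0)"
      unfolding lin_apply sum_distrib_left sum_distrib_right by (rule sum.cong) auto
    have none: "(if x = h (None, j) then c (None, j) else 0) =
        a (\<alpha>, p) * v j * (if m - p = 0 \<and> 0 < \<gamma> j \<and> \<alpha> = \<gamma>(j := \<gamma> j - 1) then 1 else 0)"
      if "(\<beta>, q) = (unitv j, 0)" for j
      using that \<open>p \<le> m\<close> by (auto simp: x h_def c_def)
    have some: "(if x = h (Some i, j) then c (Some i, j) else 0) = a (\<alpha>, p) * v j *
        (if m - p = 1 \<and> \<alpha> = \<gamma>(i := \<gamma> i + 1) then W i j * of_nat (\<gamma> i + 1) / 2 else 0)"
      if "(\<beta>, q) = (unitv j, 0)" for i j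
      using that \<open>p \<le> m\<close> by (auto simp: x h_def c_def)
    have other: "x \<noteq> h (k, j)" if "(\<beta>, q) \<noteq> (unitv j, 0)" for k j
      using that by (cases k) (simp_all add: x h_def)
    have "(if (\<beta>, q) = (unitv j, 0) then a (\<alpha>, p) * v j * mcoef W \<alpha> (unitv j) (m - p) \<gamma> else 0)
        = (if x = h (None, j) then c (None, j) else 0) +
          (\<Sum>i\<in>UNIV. if x = h (Some i, j) then c (Some i, j) else 0)" for j
      by (cases "(\<beta>, q) = (unitv j, 0)")
        (simp_all only: simp_thms if_True if_False none some other mcoef_unitv_right distrib_left
          sum_distrib_left add_0 sum.neutral_const)
    then show "a (fst x) * lin v (snd x) * mcoef W (fst (fst x)) (fst (snd x))
        (m - snd (fst x) - snd (snd x)) \<gamma> = (\<Sum>t\<in>UNIV. if x = h t then c t else 0)"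
      unfolding sum_UNIV_option_times x fst_conv snd_conv lin_expand
      by (simp only: sum.distrib)
  next
    fix t assume "c t \<noteq> 0"
    moreover obtain k j where "t = (k, j)" by force
    ultimately show "h t \<in> star_index \<gamma> m"
      using star_index_unitv[where \<gamma> = \<gamma> and m = m and j = j]
      by (cases k) (auto simp: h_def c_def split: if_splits)
  qed simp
  then show ?thesis
    by (simp add: sum_UNIV_option_times c_def)
qed

lemma star_lin_right: "star W a (lin v) = star_lin W v a"
proof (intro ext, clarify)
  fix \<gamma> m
  have "(\<Sum>j\<in>UNIV. if 0 < \<gamma> j then a (\<gamma>(j := \<gamma> j - 1), m) * v j else 0) = mul_lin v a (\<gamma>, m)"
    unfolding mul_lin_def mul_x_def by (auto intro: sum.cong)
  moreover have "(\<Sum>j\<in>UNIV. \<Sum>i\<in>UNIV. if 0 < m then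
       W i j * v j * (of_nat (\<gamma> i + 1) * a (\<gamma>(i := \<gamma> i + 1), m - 1)) / 2 else 0) =
      mul_hbar (deriv_lin W v a) (\<gamma>, m) / 2"
    unfolding mul_hbar_def deriv_lin_def deriv_x_def
    by (cases m) (simp_all add: sum_divide_distrib)
  ultimately show "star W a (lin v) (\<gamma>, m) = star_lin W v a (\<gamma>, m)"
    unfolding star_lin_def star_lin_right_apply by simp
qed

lemma star_lin_left: "star W (lin v) b = star_lin (\<lambda>i j. W j i) v b"
  by (simp add: star_transpose[of W] star_lin_right)

lemma mul_x_commute: "mul_x i (mul_x j b) = mul_x j (mul_x i b)"
  by (intro ext) (auto simp: mul_x_def fun_upd_twist)

lemma deriv_x_commute: "deriv_x i (deriv_x j b) = deriv_x j (deriv_x i b)"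
  by (intro ext) (auto simp: deriv_x_def fun_upd_twist algebra_simps)

lemma deriv_x_mul_x:
  "deriv_x i (mul_x j b) x = mul_x j (deriv_x i b) x + (if i = j then b x else 0)"
proof (cases x)
  case (Pair \<gamma> m)
  then show ?thesis
    by (cases "i = j"; cases "\<gamma> j")
      (auto simp: deriv_x_def mul_x_def algebra_simps fun_upd_idem fun_upd_twist)
qed

lemma mul_hbar_mul_x: "mul_hbar (mul_x j b) = mul_x j (mul_hbar b)"
  by (intro ext) (auto simp: mul_x_def mul_hbar_def)

lemma mul_hbar_deriv_x: "mul_hbar (deriv_x i b) = deriv_x i (mul_hbar b)"
  by (intro ext) (auto simp: deriv_x_def mul_hbar_def)

lemma mul_x_linear:
  "mul_x j (\<lambda>y. \<Sum>t\<in>A. F t y) x = (\<Sum>t\<in>A. mul_x j (F t) x)"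
  "mul_x j (\<lambda>y. c * f y) x = c * mul_x j f x"
  "mul_x j (\<lambda>y. f y + g y) x = mul_x j f x + mul_x j g x"
  "mul_x j (\<lambda>y. f y / c) x = mul_x j f x / c"
  by (cases x; simp add: mul_x_def)+

lemma deriv_x_linear:
  "deriv_x j (\<lambda>y. \<Sum>t\<in>A. F t y) x = (\<Sum>t\<in>A. deriv_x j (F t) x)"
  "deriv_x j (\<lambda>y. c * f y) x = c * deriv_x j f x"
  "deriv_x j (\<lambda>y. f y + g y) x = deriv_x j f x + deriv_x j g x"
  "deriv_x j (\<lambda>y. f y / c) x = deriv_x j f x / c"
  by (cases x; simp add: deriv_x_def sum_distrib_left algebra_simps)+

lemma mul_hbar_linear:
  "mul_hbar (\<lambda>y. \<Sum>t\<in>A. F t y) x = (\<Sum>t\<in>A. mul_hbar (F t) x)"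
  "mul_hbar (\<lambda>y. c * f y) x = c * mul_hbar f x"
  "mul_hbar (\<lambda>y. f y + g y) x = mul_hbar f x + mul_hbar g x"
  "mul_hbar (\<lambda>y. f y / c) x = mul_hbar f x / c"
  by (cases x; simp add: mul_hbar_def)+

lemmas coordinate_ops_linear = mul_x_linear deriv_x_linear mul_hbar_linear

lemma mul_lin_commute: "mul_lin v (mul_lin v' b) = mul_lin v' (mul_lin v b)"
proof (intro ext)
  fix x
  have "mul_lin v (mul_lin v' b) x = (\<Sum>j\<in>UNIV. \<Sum>j'\<in>UNIV. v j * v' j' * mul_x j (mul_x j' b) x)"
    unfolding mul_lin_def by (simp add: coordinate_ops_linear sum_distrib_left mult.assoc)
  also have "\<dots> = (\<Sum>j'\<in>UNIV. \<Sum>j\<in>UNIV. v j * v' j' * mul_x j' (mul_x j b) x)"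
    by (subst sum.swap) (simp add: mul_x_commute)
  also have "\<dots> = mul_lin v' (mul_lin v b) x"
    unfolding mul_lin_def by (simp add: coordinate_ops_linear sum_distrib_left mult_ac)
  finally show "mul_lin v (mul_lin v' b) x = mul_lin v' (mul_lin v b) x" .
qed

lemma deriv_lin_commute: "deriv_lin U v (deriv_lin U' v' b) = deriv_lin U' v' (deriv_lin U v b)"
proof (intro ext)
  fix x
  have "deriv_lin U v (deriv_lin U' v' b) x = (\<Sum>j\<in>UNIV. \<Sum>i\<in>UNIV. \<Sum>j'\<in>UNIV. \<Sum>i'\<in>UNIV.
      U i j * v j * (U' i' j' * v' j') * deriv_x i (deriv_x i' b) x)"
    unfolding deriv_lin_def by (simp add: coordinate_ops_linear sum_distrib_left mult.assoc)
  also have "\<dots> = (\<Sum>j'\<in>UNIV. \<Sum>i'\<in>UNIV. \<Sum>j\<in>UNIV. \<Sum>i\<in>UNIV.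
      U i j * v j * (U' i' j' * v' j') * deriv_x i' (deriv_x i b) x)"
    by (subst sum.swap, subst (2) sum.swap, subst (1 2) sum.swap) (simp add: deriv_x_commute)
  also have "\<dots> = deriv_lin U' v' (deriv_lin U v b) x"
    unfolding deriv_lin_def by (simp add: coordinate_ops_linear sum_distrib_left mult_ac)
  finally show "deriv_lin U v (deriv_lin U' v' b) x = deriv_lin U' v' (deriv_lin U v b) x" .
qed

lemma deriv_lin_mul_lin:
  "deriv_lin U v (mul_lin v' b) x = mul_lin v' (deriv_lin U v b) x + bform U v' v * b x"
proof -
  have "deriv_lin U v (mul_lin v' b) x =
      (\<Sum>j\<in>UNIV. \<Sum>i\<in>UNIV. \<Sum>k\<in>UNIV. U i j * v j * v' k * mul_x k (deriv_x i b) x) +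
      (\<Sum>j\<in>UNIV. \<Sum>i\<in>UNIV. \<Sum>k\<in>UNIV. U i j * v j * v' k * (if i = k then b x else 0))"
    unfolding deriv_lin_def mul_lin_def
    by (simp add: coordinate_ops_linear deriv_x_mul_x sum_distrib_left distrib_left sum.distrib
        mult.assoc)
  also have "(\<Sum>j\<in>UNIV. \<Sum>i\<in>UNIV. \<Sum>k\<in>UNIV. U i j * v j * v' k * (if i = k then b x else 0))
      = bform U v' v * b x"
    unfolding bform_def
    by (simp add: sum_distrib_left sum_distrib_right if_distrib sum.delta mult_ac cong: if_cong)
      (rule sum.swap)
  also have "(\<Sum>j\<in>UNIV. \<Sum>i\<in>UNIV. \<Sum>k\<in>UNIV. U i j * v j * v' k * mul_x k (deriv_x i b) x)
      = (\<Sum>j\<in>UNIV. \<Sum>k\<in>UNIV. \<Sum>i\<in>UNIV. U i j * v j * v' k * mul_x k (deriv_x i b) x)"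
    by (rule sum.cong[OF refl], rule sum.swap)
  also have "\<dots> = (\<Sum>k\<in>UNIV. \<Sum>j\<in>UNIV. \<Sum>i\<in>UNIV. U i j * v j * v' k * mul_x k (deriv_x i b) x)"
    by (rule sum.swap)
  also have "\<dots> = mul_lin v' (deriv_lin U v b) x"
    unfolding deriv_lin_def mul_lin_def
    by (simp add: coordinate_ops_linear sum_distrib_left mult_ac)
  finally show ?thesis .
qed

lemma mul_lin_linear:
  "mul_lin v (\<lambda>y. f y + g y) = (\<lambda>y. mul_lin v f y + mul_lin v g y)"
  "mul_lin v (\<lambda>y. f y / c) = (\<lambda>y. mul_lin v f y / c)"
  "mul_lin v (mul_hbar f) = mul_hbar (mul_lin v f)"
  by (simp_all add: fun_eq_iff mul_lin_def coordinate_ops_linear sum.distrib distrib_left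
      sum_divide_distrib mul_hbar_mul_x)

lemma deriv_lin_linear:
  "deriv_lin U v (\<lambda>y. f y + g y) = (\<lambda>y. deriv_lin U v f y + deriv_lin U v g y)"
  "deriv_lin U v (\<lambda>y. f y / c) = (\<lambda>y. deriv_lin U v f y / c)"
  "deriv_lin U v (mul_hbar f) = mul_hbar (deriv_lin U v f)"
  by (simp_all add: fun_eq_iff deriv_lin_def coordinate_ops_linear sum.distrib distrib_left
      sum_divide_distrib mul_hbar_deriv_x)

lemma star_lin_commute:
  fixes U U' :: "'i::finite \<Rightarrow> 'i \<Rightarrow> 'k::field_char_0"
  assumes "bform U v' v = bform U' v v'"
  shows "star_lin U v (star_lin U' v' b) = star_lin U' v' (star_lin U v b)"
proof (intro ext)
  fix x
  have expand: "star_lin U v (star_lin U' v' b) x = mul_lin v (mul_lin v' b) x +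
      (mul_hbar (mul_lin v (deriv_lin U' v' b)) x + mul_hbar (mul_lin v' (deriv_lin U v b)) x +
       bform U v' v * mul_hbar b x +
       mul_hbar (mul_hbar (deriv_lin U v (deriv_lin U' v' b))) x / 2) / 2"
    for U U' :: "'i \<Rightarrow> 'i \<Rightarrow> 'k" and v v'
    unfolding star_lin_def
    by (simp add: mul_lin_linear deriv_lin_linear mul_hbar_linear deriv_lin_mul_lin[abs_def])
  show "star_lin U v (star_lin U' v' b) x = star_lin U' v' (star_lin U v b) x"
    unfolding expand[of U v U' v'] expand[of U' v' U v] assms mul_lin_commute[of v]
      deriv_lin_commute[of U v] by (simp add: algebra_simps)
qed

lemma star_lin_assoc: "star W (lin v) (star W u (lin w)) = star W (star W (lin v) u) (lin w)"
  unfolding star_lin_left star_lin_right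
  by (rule star_lin_commute) (simp add: bform_def sum_distrib_left mult_ac, rule sum.swap)

subsection \<open>Reduction modulo hbar\<close>

definition const_part :: "('i, 'k) ser \<Rightarrow> ('i \<Rightarrow> nat) \<Rightarrow> 'k"
  where "const_part u = (\<lambda>\<alpha>. u (\<alpha>, 0))"

definition exp_splits :: "('i \<Rightarrow> nat) \<Rightarrow> (('i \<Rightarrow> nat) \<times> ('i \<Rightarrow> nat)) set"
  where "exp_splits \<gamma> = {(\<alpha>, \<beta>). \<forall>i. \<alpha> i + \<beta> i = \<gamma> i}"

definition cprod :: "(('i \<Rightarrow> nat) \<Rightarrow> 'k::field_char_0) \<Rightarrow> (('i \<Rightarrow> nat) \<Rightarrow> 'k) \<Rightarrow> ('i \<Rightarrow> nat) \<Rightarrow> 'k"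
  where "cprod f g \<gamma> = (\<Sum>p\<in>exp_splits \<gamma>. f (fst p) * g (snd p))"

definition cmul_x :: "'i \<Rightarrow> (('i \<Rightarrow> nat) \<Rightarrow> 'k::field_char_0) \<Rightarrow> ('i \<Rightarrow> nat) \<Rightarrow> 'k"
  where "cmul_x j g \<beta> = (if 0 < \<beta> j then g (\<beta>(j := \<beta> j - 1)) else 0)"

lemma finite_exp_splits:
  fixes \<gamma> :: "'i::finite \<Rightarrow> nat"
  shows "finite (exp_splits \<gamma>)"
proof -
  let ?B = "{\<alpha> :: 'i \<Rightarrow> nat. \<forall>i. \<alpha> i \<le> sum \<gamma> UNIV}"
  have "exp_splits \<gamma> \<subseteq> ?B \<times> ?B"
  proof
    fix p assume "p \<in> exp_splits \<gamma>"
    then obtain \<alpha> \<beta> where p: "p = (\<alpha>, \<beta>)" and split: "\<forall>i. \<alpha> i + \<beta> i = \<gamma> i"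
      unfolding exp_splits_def by auto
    have "\<gamma> i \<le> sum \<gamma> UNIV" for i
      by (simp add: member_le_sum)
    moreover have "\<alpha> i \<le> \<gamma> i" "\<beta> i \<le> \<gamma> i" for i
      using split[rule_format, of i] by linarith+
    ultimately show "p \<in> ?B \<times> ?B"
      unfolding p by (auto intro: le_trans)
  qed
  then show ?thesis
    by (rule finite_subset) (simp add: finite_bounded_exponents)
qed

lemma const_part_star: "const_part (star W a b) = cprod (const_part a) (const_part b)"
proof
  fix \<gamma>
  show "const_part (star W a b) \<gamma> = cprod (const_part a) (const_part b) \<gamma>"
    unfolding const_part_def cprod_def
  proof (rule star_apply_eq_sum_deltas[OF finite_exp_splits, where h = "\<lambda>(\<alpha>, \<beta>). ((\<alpha>, 0), (\<beta>, 0))"])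
    fix x assume "x \<in> star_index \<gamma> 0"
    then obtain \<alpha> \<beta> where x: "x = ((\<alpha>, 0), (\<beta>, 0))"
      unfolding star_index_def by auto
    have "(\<Sum>p\<in>exp_splits \<gamma>. if (\<alpha>, \<beta>) = p then a (fst p, 0) * b (snd p, 0) else 0)
        = (if (\<alpha>, \<beta>) \<in> exp_splits \<gamma> then a (\<alpha>, 0) * b (\<beta>, 0) else 0)"
      by (simp add: sum.delta finite_exp_splits)
    then show "a (fst x) * b (snd x) *
          mcoef W (fst (fst x)) (fst (snd x)) (0 - snd (fst x) - snd (snd x)) \<gamma>
        = (\<Sum>p\<in>exp_splits \<gamma>. if x = (case p of (\<alpha>, \<beta>) \<Rightarrow> ((\<alpha>, 0), \<beta>, 0))
            then a (fst p, 0) * b (snd p, 0) else 0)"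
      by (simp add: x mcoef_0 exp_splits_def case_prod_beta prod_eq_iff)
  next
    fix p assume "p \<in> exp_splits \<gamma>"
    then show "(case p of (\<alpha>, \<beta>) \<Rightarrow> ((\<alpha>, 0), \<beta>, 0)) \<in> star_index \<gamma> 0"
      by (auto simp: exp_splits_def star_index_def sum.distrib[symmetric])
  qed
qed

lemma cprod_cmul_x:
  fixes f :: "('i::finite \<Rightarrow> nat) \<Rightarrow> 'k::field_char_0"
  shows "cprod f (cmul_x j g) = cmul_x j (cprod f g)"
proof
  fix \<gamma> :: "'i \<Rightarrow> nat"
  show "cprod f (cmul_x j g) \<gamma> = cmul_x j (cprod f g) \<gamma>"
  proof (cases "0 < \<gamma> j")
    case False
    then show ?thesis
      unfolding cprod_def cmul_x_def
      by (auto simp: exp_splits_def intro!: sum.neutral dest: spec[of _ j])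
  next
    case True
    let ?g' = "\<gamma>(j := \<gamma> j - 1)"
    have "cprod f (cmul_x j g) \<gamma> =
        (\<Sum>p\<in>{p \<in> exp_splits \<gamma>. 0 < snd p j}. f (fst p) * g ((snd p)(j := snd p j - 1)))"
      unfolding cprod_def cmul_x_def
      by (subst sum.inter_filter[OF finite_exp_splits]) (auto intro: sum.cong)
    also have "\<dots> = (\<Sum>p\<in>exp_splits ?g'. f (fst p) * g (snd p))"
      by (rule sum.reindex_bij_witness[where i = "\<lambda>(\<alpha>, \<beta>). (\<alpha>, \<beta>(j := \<beta> j + 1))"
          and j = "\<lambda>(\<alpha>, \<beta>). (\<alpha>, \<beta>(j := \<beta> j - 1))"])
        (auto simp: exp_splits_def True split: prod.splits)
    also have "\<dots> = cmul_x j (cprod f g) \<gamma>"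
      using True unfolding cmul_x_def cprod_def by simp
    finally show ?thesis .
  qed
qed

definition cmul_lin :: "('i::finite \<Rightarrow> 'k::field_char_0) \<Rightarrow> (('i \<Rightarrow> nat) \<Rightarrow> 'k) \<Rightarrow> ('i \<Rightarrow> nat) \<Rightarrow> 'k"
  where "cmul_lin v g = (\<lambda>\<gamma>. \<Sum>j\<in>UNIV. v j * cmul_x j g \<gamma>)"

lemma cprod_cmul_lin: "cprod f (cmul_lin v g) = cmul_lin v (cprod f g)"
  by (simp add: fun_eq_iff cmul_lin_def cprod_cmul_x[symmetric] cprod_def sum_distrib_left
      mult_ac sum.swap[of _ "exp_splits _"])

lemma const_part_star_lin: "const_part (star_lin U v a) = cmul_lin v (const_part a)"
  by (simp add: fun_eq_iff star_lin_def mul_lin_def const_part_def mul_hbar_def mul_x_def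
      cmul_lin_def cmul_x_def)

lemma const_part_mul_hbar: "const_part (mul_hbar b) = 0"
  by (simp add: fun_eq_iff const_part_def mul_hbar_def)

lemma const_part_add: "const_part (a + b) = const_part a + const_part b"
  by (simp add: fun_eq_iff const_part_def)

lemma const_part_diff: "const_part (a - b) = const_part a - const_part b"
  by (simp add: fun_eq_iff const_part_def)

lemma const_part_zero: "const_part 0 = 0"
  by (simp add: fun_eq_iff const_part_def)

lemma const_part_eq_0_iff: "const_part z = 0 \<longleftrightarrow> (\<exists>t. z = mul_hbar t)"
proof
  assume z: "const_part z = 0"
  have "z = mul_hbar (\<lambda>(\<alpha>, m). z (\<alpha>, m + 1))"
  proof (intro ext, clarify)
    fix \<alpha> m show "z (\<alpha>, m) = mul_hbar (\<lambda>(\<alpha>, m). z (\<alpha>, m + 1)) (\<alpha>, m)"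
      using fun_cong[OF z, of \<alpha>] by (cases m) (simp_all add: mul_hbar_def const_part_def)
  qed
  then show "\<exists>t. z = mul_hbar t" by blast
qed (auto simp: const_part_mul_hbar)

definition gen_sums :: "('a \<Rightarrow> 'b \<Rightarrow> 'c::comm_monoid_add) \<Rightarrow> 'b set \<Rightarrow> 'c set"
  where "gen_sums F X = {\<Sum>t<(N::nat). F (u t) (v t) | N u v. \<forall>t<N. v t \<in> X}"

lemma gen_sums_intro: "\<forall>t<N. v t \<in> X \<Longrightarrow> (\<Sum>t<(N::nat). F (u t) (v t)) \<in> gen_sums F X"
  unfolding gen_sums_def by blast

lemma gen_sums_single: "v \<in> X \<Longrightarrow> F u v \<in> gen_sums F X"
  unfolding gen_sums_def by (rule CollectI, rule exI[of _ 1]) auto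

lemma gen_sums_zero: "0 \<in> gen_sums F X"
  unfolding gen_sums_def by (rule CollectI, rule exI[of _ 0]) auto

lemma gen_sums_add:
  assumes "x \<in> gen_sums F X" "y \<in> gen_sums F X"
  shows "x + y \<in> gen_sums F X"
proof -
  obtain N1 u1 v1 where x: "x = (\<Sum>t<(N1::nat). F (u1 t) (v1 t))" "\<forall>t<N1. v1 t \<in> X"
    using assms(1) unfolding gen_sums_def by blast
  obtain N2 u2 v2 where y: "y = (\<Sum>t<(N2::nat). F (u2 t) (v2 t))" "\<forall>t<N2. v2 t \<in> X"
    using assms(2) unfolding gen_sums_def by blast
  define u where "u t = (if t < N1 then u1 t else u2 (t - N1))" for t
  define v where "v t = (if t < N1 then v1 t else v2 (t - N1))" for t
  have "(\<Sum>t<N1 + n. F (u t) (v t)) = x + (\<Sum>t<n. F (u2 t) (v2 t))" for n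
    by (induction n) (simp_all add: x(1) u_def v_def add.assoc)
  then have "x + y = (\<Sum>t<N1 + N2. F (u t) (v t))"
    by (simp add: y(1))
  moreover have "\<forall>t<N1 + N2. v t \<in> X"
    using x(2) y(2) by (simp add: v_def)
  ultimately show ?thesis
    by (simp add: gen_sums_intro)
qed

lemma additive_sum_lessThan:
  assumes "\<And>x y. G (x + y) = G x + G y" and "G 0 = 0"
  shows "G (\<Sum>t<(N::nat). f t) = (\<Sum>t<N. G (f t))"
  by (induction N) (simp_all add: assms)

lemma gen_sums_map:
  assumes "\<And>u v. v \<in> X \<Longrightarrow> G (F u v) = F' (\<phi> u) v"
    and "\<And>x y. G (x + y) = G x + G y" and "G 0 = 0"
    and "x \<in> gen_sums F X"
  shows "G x \<in> gen_sums F' X"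
proof -
  obtain N u v where x: "x = (\<Sum>t<(N::nat). F (u t) (v t))" and v: "\<forall>t<N. v t \<in> X"
    using assms(4) unfolding gen_sums_def by blast
  then have "G x = (\<Sum>t<N. F' (\<phi> (u t)) (v t))"
    by (simp add: additive_sum_lessThan[of G, OF assms(2,3)] assms(1))
  with v show ?thesis
    using gen_sums_intro[of N v X F' "\<lambda>t. \<phi> (u t)"] by simp
qed

lemma gen_sums_map_surj:
  assumes "\<And>u v. v \<in> X \<Longrightarrow> G (F u v) = F' (\<phi> u) v"
    and "\<And>x y. G (x + y) = G x + G y" and "G 0 = 0" and "surj \<phi>"
  shows "G ` gen_sums F X = gen_sums F' X"
proof
  show "G ` gen_sums F X \<subseteq> gen_sums F' X"
    using gen_sums_map[of X G F F' \<phi>] assms(1-3) by blast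
next
  show "gen_sums F' X \<subseteq> G ` gen_sums F X"
  proof
    fix y assume "y \<in> gen_sums F' X"
    then obtain N u v where y: "y = (\<Sum>t<(N::nat). F' (u t) (v t))" and v: "\<forall>t<N. v t \<in> X"
      unfolding gen_sums_def by blast
    define x where "x = (\<Sum>t<N. F (inv \<phi> (u t)) (v t))"
    have "G x = y"
      unfolding x_def y using v
      by (simp add: additive_sum_lessThan[of G, OF assms(2,3)] assms(1) surj_f_inv_f[OF assms(4)])
    moreover have "x \<in> gen_sums F X"
      unfolding x_def using v by (rule gen_sums_intro)
    ultimately show "y \<in> G ` gen_sums F X" by blast
  qed
qed

subsection \<open>The left ideal D x and the ideal J\<close>

definition lin_ideal :: "('i::finite \<Rightarrow> 'k::field_char_0) set \<Rightarrow> (('i \<Rightarrow> nat) \<Rightarrow> 'k) set"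
  where "lin_ideal X = gen_sums (\<lambda>g v. cmul_lin v g) X"

lemma DX_eq_gen_sums: "DX W X = gen_sums (\<lambda>u v. star W u (lin v)) X"
  by (simp add: DX_def gen_sums_def)

lemma mul_hbar_add: "mul_hbar (a + b) = mul_hbar a + mul_hbar b"
  by (simp add: fun_eq_iff mul_hbar_def)

lemma mul_hbar_diff: "mul_hbar (a - b) = mul_hbar a - mul_hbar b"
  by (simp add: fun_eq_iff mul_hbar_def)

lemma mul_hbar_zero: "mul_hbar 0 = 0"
  by (simp add: fun_eq_iff mul_hbar_def)

lemma mul_hbar_star_lin: "mul_hbar (star_lin U v b) = star_lin U v (mul_hbar b)"
  by (simp add: fun_eq_iff star_lin_def mul_lin_linear deriv_lin_linear mul_hbar_linear)

lemma DX_add: "a \<in> DX W X \<Longrightarrow> b \<in> DX W X \<Longrightarrow> a + b \<in> DX W X"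
  unfolding DX_eq_gen_sums by (rule gen_sums_add)

lemma DX_uminus: "a \<in> DX W X \<Longrightarrow> - a \<in> DX W X"
  unfolding DX_eq_gen_sums
  by (rule gen_sums_map[where G = uminus and \<phi> = uminus]) (simp_all add: star_uminus_left)

lemma DX_diff: "a \<in> DX W X \<Longrightarrow> b \<in> DX W X \<Longrightarrow> a - b \<in> DX W X"
  using DX_add[of a W X "- b"] DX_uminus[of b W X] by simp

lemma DX_mul_hbar: "a \<in> DX W X \<Longrightarrow> mul_hbar a \<in> DX W X"
  unfolding DX_eq_gen_sums
  by (rule gen_sums_map[where G = mul_hbar and \<phi> = mul_hbar])
    (simp_all add: star_lin_right mul_hbar_star_lin mul_hbar_add mul_hbar_zero)

lemma DX_star_lin_left: "a \<in> DX W X \<Longrightarrow> star W (lin v) a \<in> DX W X"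
  unfolding DX_eq_gen_sums
  by (rule gen_sums_map[where G = "star W (lin v)" and \<phi> = "star W (lin v)"])
    (simp_all add: star_lin_assoc star_add_right star_zero_right)

lemma star_lin_right_in_DX: "v \<in> X \<Longrightarrow> star W a (lin v) \<in> DX W X"
  unfolding DX_eq_gen_sums by (rule gen_sums_single)

lemma lin_in_DX: "v \<in> X \<Longrightarrow> lin v \<in> DX W X"
  using star_lin_right_in_DX[of v X W one] by (simp add: star_one_left)

lemma const_part_DX: "const_part ` DX W X = lin_ideal X"
  unfolding DX_eq_gen_sums lin_ideal_def
proof (rule gen_sums_map_surj[where \<phi> = const_part])
  show "surj (const_part :: ('i, 'k) ser \<Rightarrow> _)"
    by (rule surjI[of _ "\<lambda>g (\<alpha>, m). g \<alpha>"]) (simp add: const_part_def)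
qed (simp_all add: star_lin_right const_part_star_lin const_part_add const_part_zero)

lemma lin_ideal_add: "f \<in> lin_ideal X \<Longrightarrow> g \<in> lin_ideal X \<Longrightarrow> f + g \<in> lin_ideal X"
  unfolding lin_ideal_def by (rule gen_sums_add)

lemma lin_ideal_uminus: "g \<in> lin_ideal X \<Longrightarrow> - g \<in> lin_ideal X"
  unfolding lin_ideal_def
  by (rule gen_sums_map[where G = uminus and \<phi> = uminus])
    (auto simp: fun_eq_iff cmul_lin_def cmul_x_def sum_negf[symmetric] intro!: sum.cong)

lemma lin_ideal_diff: "f \<in> lin_ideal X \<Longrightarrow> g \<in> lin_ideal X \<Longrightarrow> f - g \<in> lin_ideal X"
  using lin_ideal_add[of f X "- g"] lin_ideal_uminus[of g X] by simp

lemma lin_ideal_cprod: "g \<in> lin_ideal X \<Longrightarrow> cprod f g \<in> lin_ideal X"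
  unfolding lin_ideal_def
  by (rule gen_sums_map[where G = "cprod f" and \<phi> = "cprod f"])
    (simp_all add: cprod_cmul_lin fun_eq_iff cprod_def distrib_left sum.distrib)

lemma JJ_iff_const_part: "u \<in> JJ W X \<longleftrightarrow> const_part u \<in> lin_ideal X"
proof
  assume "u \<in> JJ W X"
  then obtain w t where w: "w \<in> DX W X" and "u - w = mul_hbar t"
    unfolding JJ_def star_hbar_left by blast
  then have "const_part u = const_part w"
    using const_part_diff[of u w] const_part_mul_hbar[of t] by simp
  with w show "const_part u \<in> lin_ideal X"
    using const_part_DX by blast
next
  assume "const_part u \<in> lin_ideal X"
  then obtain w where w: "w \<in> DX W X" and "const_part w = const_part u"
    using const_part_DX by (metis imageE)
  then have "const_part (u - w) = 0"
    by (simp add: const_part_diff)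
  then obtain t where "u - w = mul_hbar t"
    by (auto simp: const_part_eq_0_iff)
  with w show "u \<in> JJ W X"
    unfolding JJ_def star_hbar_left by blast
qed

lemma JJ_add: "a \<in> JJ W X \<Longrightarrow> b \<in> JJ W X \<Longrightarrow> a + b \<in> JJ W X"
  by (simp add: JJ_iff_const_part const_part_add lin_ideal_add)

lemma JJ_diff: "a \<in> JJ W X \<Longrightarrow> b \<in> JJ W X \<Longrightarrow> a - b \<in> JJ W X"
  by (simp add: JJ_iff_const_part const_part_diff lin_ideal_diff)

lemma DX_subset_JJ: "DX W X \<subseteq> JJ W X"
  using const_part_DX[of W X] by (auto simp: JJ_iff_const_part)

lemma mul_hbar_in_JJ: "mul_hbar t \<in> JJ W X"
  using gen_sums_zero by (simp add: JJ_iff_const_part const_part_mul_hbar lin_ideal_def)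

lemma JJ_sum: "(\<And>t. t < N \<Longrightarrow> f t \<in> JJ W X) \<Longrightarrow> (\<Sum>t<(N::nat). f t) \<in> JJ W X"
  by (induction N) (simp_all add: JJ_add mul_hbar_in_JJ[of 0, simplified mul_hbar_zero])

lemma star_left_in_JJ: "a \<in> JJ W X \<Longrightarrow> star W b a \<in> JJ W X"
  by (simp add: JJ_iff_const_part const_part_star lin_ideal_cprod)

lemma star_lin_in_JJ: "v \<in> X \<Longrightarrow> star W (lin v) c \<in> JJ W X"
  using gen_sums_single[of v X "\<lambda>g v. cmul_lin v g"]
  by (simp add: JJ_iff_const_part star_lin_left const_part_star_lin lin_ideal_def)

lemma JJ_intro: "u - mul_hbar z \<in> DX W X \<Longrightarrow> u \<in> JJ W X"
  unfolding JJ_def star_hbar_left by force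

subsection \<open>The module M\<close>

lemma Mcls_iff: "b \<in> Mcls W X a \<longleftrightarrow> b - a \<in> DX W X"
  by (simp add: Mcls_def)

lemma Mcls_self: "a \<in> Mcls W X a"
  using gen_sums_zero by (simp add: Mcls_iff DX_eq_gen_sums)

lemma Mcls_eqI: "a - b \<in> DX W X \<Longrightarrow> Mcls W X a = Mcls W X b"
  unfolding Mcls_def using DX_add[of _ W X "a - b"] DX_diff[of _ W X "a - b"]
  by (metis (no_types, lifting) diff_add_cancel diff_diff_eq2 set_eq_iff mem_Collect_eq)

lemma Mcls_in_Mcar: "Mcls W X a \<in> Mcar W X"
  by (simp add: Mcar_def)

lemma Mcar_cases:
  assumes "m \<in> Mcar W X"
  obtains a where "m = Mcls W X a"
  using assms unfolding Mcar_def by blast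

lemma UN_Mcls_map:
  assumes "\<And>d. d \<in> DX W X \<Longrightarrow> G d \<in> DX W X" and "\<And>a b. G (a - b) = G a - G b"
  shows "(\<Union>c'\<in>Mcls W X c. Mcls W X (G c')) = Mcls W X (G c)"
proof -
  have "Mcls W X (G c') = Mcls W X (G c)" if "c' \<in> Mcls W X c" for c'
  proof (rule Mcls_eqI)
    have "c' - c \<in> DX W X"
      using that by (simp add: Mcls_iff)
    then show "G c' - G c \<in> DX W X"
      using assms by metis
  qed
  then show ?thesis
    using Mcls_self[of c W X] by blast
qed

lemma mact_lin: "mact W X (lin v) (Mcls W X c) = Mcls W X (star W (lin v) c)"
  unfolding mact_def by (rule UN_Mcls_map) (simp_all add: DX_star_lin_left star_diff_right)

lemma mhmult_hbar: "mhmult W X (\<lambda>p. if p = 1 then 1 else 0) (Mcls W X c) = Mcls W X (mul_hbar c)"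
  unfolding mhmult_def hmult_hbar
  by (rule UN_Mcls_map) (simp_all add: DX_mul_hbar mul_hbar_diff)

lemma mhmult_zero: "mhmult W X (\<lambda>_. 0) (Mcls W X c) = Mcls W X 0"
  unfolding mhmult_def hmult_zero by (rule UN_Mcls_map) (simp_all add: DX_eq_gen_sums gen_sums_zero)

lemma mact_mem: "star W u c \<in> mact W X u (Mcls W X c)"
  unfolding mact_def using Mcls_self[of c W X] Mcls_self[of "star W u c" W X] by blast

lemma madd_mem: "a \<in> m1 \<Longrightarrow> b \<in> m2 \<Longrightarrow> a + b \<in> madd W X m1 m2"
  unfolding madd_def using Mcls_self[of "a + b" W X] by blast

subsection \<open>Automorphisms and derivations of the pair (D, M)\<close>

lemma khlin_mul_hbar: "khlin f \<Longrightarrow> f (mul_hbar t) = mul_hbar (f t)"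
  unfolding khlin_def hmult_hbar[symmetric] by blast

lemma khlin_sum_lessThan:
  assumes "khlin f"
  shows "f (\<Sum>t<(N::nat). g t) = (\<Sum>t<N. f (g t))"
proof (rule additive_sum_lessThan[where G = f])
  show add: "f (x + y) = f x + f y" for x y
    using assms unfolding khlin_def by blast
  show "f 0 = 0"
    using add[of 0 0] by simp
qed

lemma khlin_maps_JJ:
  assumes "khlin f" and "\<And>a v. v \<in> X \<Longrightarrow> f (star W a (lin v)) \<in> JJ W X" and "u \<in> JJ W X"
  shows "f u \<in> JJ W X"
proof -
  obtain w t where "w \<in> DX W X" and "u - w = mul_hbar t"
    using assms(3) unfolding JJ_def star_hbar_left by blast
  then obtain N a v where v: "\<forall>s<N. v s \<in> X"
    and u: "u = (\<Sum>s<(N::nat). star W (a s) (lin (v s))) + mul_hbar t"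
    unfolding DX_eq_gen_sums gen_sums_def by (auto simp: algebra_simps)
  have "f u = (\<Sum>s<N. f (star W (a s) (lin (v s)))) + mul_hbar (f t)"
    using assms(1) unfolding u khlin_def by (simp add: khlin_sum_lessThan[OF assms(1)]
      khlin_mul_hbar[OF assms(1)])
  then show ?thesis
    using v assms(2) by (simp add: JJ_add JJ_sum mul_hbar_in_JJ)
qed

lemma aut_lin_in_JJ:
  assumes "(f, g) \<in> AutDM W X" and "v \<in> X"
  shows "f (lin v) \<in> JJ W X"
proof -
  from assms(1) have onto: "g ` Mcar W X = Mcar W X" and linear: "khlinM W X g"
    and equivariant: "\<And>u m. m \<in> Mcar W X \<Longrightarrow> g (mact W X u m) = mact W X (f u) (g m)"
    unfolding AutDM_def bij_betw_def by auto
  obtain m where "m \<in> Mcar W X" and m: "g m = Mcls W X one"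
    using Mcls_in_Mcar[of W X one] by (metis onto imageE)
  from \<open>m \<in> Mcar W X\<close> obtain c where c: "g (Mcls W X c) = Mcls W X one"
    by (rule Mcar_cases) (use m in simp)
  obtain w t where "w \<in> DX W X" and "star W (lin v) c - w = mul_hbar t"
    using star_lin_in_JJ[OF assms(2), of W c] unfolding JJ_def star_hbar_left by blast
  then have lin_c: "Mcls W X (star W (lin v) c) = Mcls W X (mul_hbar t)"
    by (intro Mcls_eqI) (simp add: algebra_simps)
  obtain z where z: "g (Mcls W X t) = Mcls W X z"
    using Mcls_in_Mcar[of W X t] onto by (metis imageI Mcar_cases)
  have "mact W X (f (lin v)) (Mcls W X one) = g (mact W X (lin v) (Mcls W X c))"
    using equivariant[OF Mcls_in_Mcar, of "lin v" c] by (simp only: c)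
  also have "\<dots> = g (mhmult W X (\<lambda>p. if p = 1 then 1 else 0) (Mcls W X t))"
    by (simp only: mact_lin lin_c mhmult_hbar)
  also have "\<dots> = mhmult W X (\<lambda>p. if p = 1 then 1 else 0) (g (Mcls W X t))"
    using linear Mcls_in_Mcar unfolding khlinM_def by blast
  also have "\<dots> = Mcls W X (mul_hbar z)"
    by (simp only: z mhmult_hbar)
  finally have "f (lin v) \<in> Mcls W X (mul_hbar z)"
    using mact_mem[of W "f (lin v)" one X] by (simp only: star_one_right)
  then show ?thesis
    by (simp add: Mcls_iff JJ_intro)
qed

lemma der_lin_in_JJ:
  assumes "(d, e) \<in> DerDM W X" and "v \<in> X"
  shows "d (lin v) \<in> JJ W X"
proof -
  from assms(1) have into: "e ` Mcar W X \<subseteq> Mcar W X" and linear: "khlinM W X e"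
    and leibniz: "\<And>u m. m \<in> Mcar W X \<Longrightarrow>
      e (mact W X u m) = madd W X (mact W X (d u) m) (mact W X u (e m))"
    unfolding DerDM_def by auto
  have "e (Mcls W X one) \<in> Mcar W X"
    using into Mcls_in_Mcar by blast
  then obtain z where z: "e (Mcls W X one) = Mcls W X z"
    by (rule Mcar_cases)
  have "mact W X (lin v) (Mcls W X one) = mhmult W X (\<lambda>_. 0) (Mcls W X one)"
    unfolding mact_lin mhmult_zero star_one_right
    by (rule Mcls_eqI) (simp add: lin_in_DX[OF assms(2)])
  then have "e (mact W X (lin v) (Mcls W X one)) = mhmult W X (\<lambda>_. 0) (e (Mcls W X one))"
    using linear Mcls_in_Mcar[of W X one] unfolding khlinM_def by simp
  also have "\<dots> = Mcls W X 0"
    by (simp only: z mhmult_zero)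
  finally have "e (mact W X (lin v) (Mcls W X one)) = Mcls W X 0" .
  moreover have "d (lin v) + star W (lin v) z \<in> e (mact W X (lin v) (Mcls W X one))"
    unfolding leibniz[OF Mcls_in_Mcar] unfolding z mact_lin
    using madd_mem[OF mact_mem[of W "d (lin v)" one X] Mcls_self[of "star W (lin v) z" W X], of W X]
    by (simp only: star_one_right)
  ultimately have "d (lin v) + star W (lin v) z \<in> DX W X"
    by (simp add: Mcls_iff)
  with DX_subset_JJ have "d (lin v) + star W (lin v) z \<in> JJ W X"
    by blast
  from JJ_diff[OF this star_lin_in_JJ[OF assms(2), of W z]] show ?thesis
    by simp
qed

lemma aut_preserves_JJ:
  assumes "(f, g) \<in> AutDM W X" and "u \<in> JJ W X"
  shows "f u \<in> JJ W X"
proof -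
  from assms(1) have "khlin f" and hom: "f (star W a (lin v)) = star W (f a) (f (lin v))" for a v
    by (simp_all add: AutDM_def AutD_def)
  show ?thesis
    by (rule khlin_maps_JJ[OF \<open>khlin f\<close> _ assms(2)])
      (simp add: hom star_left_in_JJ aut_lin_in_JJ[OF assms(1)])
qed

lemma der_preserves_JJ:
  assumes "(d, e) \<in> DerDM W X" and "u \<in> JJ W X"
  shows "d u \<in> JJ W X"
proof -
  from assms(1) have "khlin d"
    and leibniz: "d (star W a (lin v)) = star W (d a) (lin v) + star W a (d (lin v))" for a v
    by (simp_all add: DerDM_def DerD_def)
  have right_lin: "star W a (lin v) \<in> JJ W X" if "v \<in> X" for a v
    using DX_subset_JJ star_lin_right_in_DX[OF that] by blast
  show ?thesis
    by (rule khlin_maps_JJ[OF \<open>khlin d\<close> _ assms(2)])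
      (simp add: leibniz right_lin JJ_add star_left_in_JJ der_lin_in_JJ[OF assms(1)])
qed

theorem lemma3p2:
  fixes W :: "'i::finite \<Rightarrow> 'i \<Rightarrow> 'k::field_char_0" and X :: "('i \<Rightarrow> 'k) set"
  assumes "symplectic W" and "lagrangian W X"
  shows "fst ` AutDM W X \<subseteq> AutDJ W X \<and> fst ` DerDM W X \<subseteq> DerDJ W X"
proof (intro conjI subsetI)
  fix f assume "f \<in> fst ` AutDM W X"
  then obtain g where fg: "(f, g) \<in> AutDM W X" by force
  then show "f \<in> AutDJ W X"
    using aut_preserves_JJ[OF fg] by (simp add: AutDJ_def AutDM_def)
next
  fix d assume "d \<in> fst ` DerDM W X"
  then obtain e where de: "(d, e) \<in> DerDM W X" by force
  then show "d \<in> DerDJ W X"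
    using der_preserves_JJ[OF de] by (simp add: DerDJ_def DerDM_def)
qed

end
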